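(* Let $\mathcal{M}$ be the class of structures over $\Sigma_{md,\bot}$ that satisfy all equations of $\mathsf{Md}_\bot$, the Normal Value Law and the Additional Value Law, and in which $0\neq 1$. The models in $\mathcal{M}$ are in one-to-one correspondence with the involutive cancellation meadows (models of $\mathsf{Md}$ satisfying the cancellation law), via the following correspondence: an involutive cancellation meadow is extended by a new element $\hat\bot$ interpreting $\bot$, all operations applied to $\hat\bot$ yield $\hat\bot$ and $0^{-1}$ is redefined as $\hat\bot$, giving a model in $\mathcal{M}$; conversely, from $M\in\mathcal{M}$ one removes the interpretation $\hat\bot$ of $\bot$ and sets $0^{-1}=0$, obtaining an involutive cancellation meadow.
   Context: The signature $\Sigma_{md,\bot}$ has one sort, constants $0,1,\bot$, binary operations $+,\cdot$ and unary operations $-$ and $(\,\cdot\,)^{-1}$; $\Sigma_{md}$ is the same signature without $\bot$. $\mathsf{Md}_\bot$ is the set of equations: $(x+y)+z=x+(y+z)$; $x+y=y+x$; $x+0=x$; $x+(-x)=0\cdot x$; $(x\cdot y)\cdot z=x\cdot(y\cdot z)$; $x\cdot y=y\cdot x$; $1\cdot x=x$; $x\cdot(y+z)=x\cdot y+x\cdot z$; $-(-x)=x$; $0\cdot(x\cdot x)=0\cdot x$; $(x^{-1})^{-1}=x+0\cdot x^{-1}$; $x\cdot x^{-1}=1+0\cdot x^{-1}$; $(x\cdot y)^{-1}=x^{-1}\cdot y^{-1}$; $1^{-1}=1$; $0^{-1}=\bot$; $x+\bot=\bot$; $x\cdot\bot=\bot$. Normal Value Law: $x\neq\bot\rightarrow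 0\cdot x=0$. Additional Value Law: $x^{-1}=\bot\rightarrow 0\cdot x=x$. $\mathsf{Md}$ is the set of equations over $\Sigma_{md}$: $(x+y)+z=x+(y+z)$; $x+y=y+x$; $x+0=x$; $x+(-x)=0$; $(x\cdot y)\cdot z=x\cdot(y\cdot z)$; $x\cdot y=y\cdot x$; $1\cdot x=x$; $x\cdot(y+z)=x\cdot y+x\cdot z$; $(x^{-1})^{-1}=x$; $x\cdot(x\cdot x^{-1})=x$. An involutive cancellation meadow is a $\Sigma_{md}$-structure satisfying $\mathsf{Md}$ and the cancellation law $(x\neq 0\wedge x\cdot y=x\cdot z)\rightarrow y=z$. *)

theory Defs
  imports Main
begin

text \<open>Structures over the signature Sigma_md: a carrier set inside a type together
  with interpretations of 0, 1, +, *, - and inverse (only their values on the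
  carrier matter).\<close>
record 'a md_struct =
  md_carrier :: "'a set"
  md_zero :: 'a
  md_one :: 'a
  md_add :: "'a \<Rightarrow> 'a \<Rightarrow> 'a"
  md_mul :: "'a \<Rightarrow> 'a \<Rightarrow> 'a"
  md_neg :: "'a \<Rightarrow> 'a"
  md_inv :: "'a \<Rightarrow> 'a"

record 'a mdb_struct =
  mb_carrier :: "'a set"
  mb_zero :: 'a
  mb_one :: 'a
  mb_bot :: 'a
  mb_add :: "'a \<Rightarrow> 'a \<Rightarrow> 'a"
  mb_mul :: "'a \<Rightarrow> 'a \<Rightarrow> 'a"
  mb_neg :: "'a \<Rightarrow> 'a"
  mb_inv :: "'a \<Rightarrow> 'a"

definition is_md_struct :: "'a md_struct \<Rightarrow> bool" where
  "is_md_struct A \<longleftrightarrow>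
     md_zero A \<in> md_carrier A \<and> md_one A \<in> md_carrier A \<and>
     (\<forall>x\<in>md_carrier A. \<forall>y\<in>md_carrier A.
        md_add A x y \<in> md_carrier A \<and> md_mul A x y \<in> md_carrier A) \<and>
     (\<forall>x\<in>md_carrier A. md_neg A x \<in> md_carrier A \<and> md_inv A x \<in> md_carrier A)"

definition is_mdb_struct :: "'a mdb_struct \<Rightarrow> bool" where
  "is_mdb_struct M \<longleftrightarrow>
     mb_zero M \<in> mb_carrier M \<and> mb_one M \<in> mb_carrier M \<and> mb_bot M \<in> mb_carrier M \<and>
     (\<forall>x\<in>mb_carrier M. \<forall>y\<in>mb_carrier M.
        mb_add M x y \<in> mb_carrier M \<and> mb_mul M x y \<in> mb_carrier M) \<and>
     (\<forall>x\<in>mb_carrier M. mb_neg M x \<in> mb_carrier M \<and> mb_inv M x \<in> mb_carrier M)"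

definition sat_Md :: "'a md_struct \<Rightarrow> bool" where
  "sat_Md A \<longleftrightarrow> (let C = md_carrier A; z = md_zero A; e = md_one A;
        p = md_add A; m = md_mul A; n = md_neg A; i = md_inv A in
     (\<forall>x\<in>C. \<forall>y\<in>C. \<forall>w\<in>C. p (p x y) w = p x (p y w)) \<and>
     (\<forall>x\<in>C. \<forall>y\<in>C. p x y = p y x) \<and>
     (\<forall>x\<in>C. p x z = x) \<and>
     (\<forall>x\<in>C. p x (n x) = z) \<and>
     (\<forall>x\<in>C. \<forall>y\<in>C. \<forall>w\<in>C. m (m x y) w = m x (m y w)) \<and>
     (\<forall>x\<in>C. \<forall>y\<in>C. m x y = m y x) \<and>
     (\<forall>x\<in>C. m e x = x) \<and>
     (\<forall>x\<in>C. \<forall>y\<in>C. \<forall>w\<in>C. m x (p y w) = p (m x y) (m x w)) \<and>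
     (\<forall>x\<in>C. i (i x) = x) \<and>
     (\<forall>x\<in>C. m x (m x (i x)) = x))"

definition cancellation_law :: "'a md_struct \<Rightarrow> bool" where
  "cancellation_law A \<longleftrightarrow>
     (\<forall>x\<in>md_carrier A. \<forall>y\<in>md_carrier A. \<forall>w\<in>md_carrier A.
        x \<noteq> md_zero A \<and> md_mul A x y = md_mul A x w \<longrightarrow> y = w)"

definition involutive_cancellation_meadow :: "'a md_struct \<Rightarrow> bool" where
  "involutive_cancellation_meadow A \<longleftrightarrow> is_md_struct A \<and> sat_Md A \<and> cancellation_law A"

definition sat_Md_bot :: "'a mdb_struct \<Rightarrow> bool" where
  "sat_Md_bot M \<longleftrightarrow> (let C = mb_carrier M; z = mb_zero M; e = mb_one M; b = mb_bot M;
        p = mb_add M; m = mb_mul M; n = mb_neg M; i = mb_inv M in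
     (\<forall>x\<in>C. \<forall>y\<in>C. \<forall>w\<in>C. p (p x y) w = p x (p y w)) \<and>
     (\<forall>x\<in>C. \<forall>y\<in>C. p x y = p y x) \<and>
     (\<forall>x\<in>C. p x z = x) \<and>
     (\<forall>x\<in>C. p x (n x) = m z x) \<and>
     (\<forall>x\<in>C. \<forall>y\<in>C. \<forall>w\<in>C. m (m x y) w = m x (m y w)) \<and>
     (\<forall>x\<in>C. \<forall>y\<in>C. m x y = m y x) \<and>
     (\<forall>x\<in>C. m e x = x) \<and>
     (\<forall>x\<in>C. \<forall>y\<in>C. \<forall>w\<in>C. m x (p y w) = p (m x y) (m x w)) \<and>
     (\<forall>x\<in>C. n (n x) = x) \<and>
     (\<forall>x\<in>C. m z (m x x) = m z x) \<and>
     (\<forall>x\<in>C. i (i x) = p x (m z (i x))) \<and>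
     (\<forall>x\<in>C. m x (i x) = p e (m z (i x))) \<and>
     (\<forall>x\<in>C. \<forall>y\<in>C. i (m x y) = m (i x) (i y)) \<and>
     i e = e \<and>
     i z = b \<and>
     (\<forall>x\<in>C. p x b = b) \<and>
     (\<forall>x\<in>C. m x b = b))"

definition normal_value_law :: "'a mdb_struct \<Rightarrow> bool" where
  "normal_value_law M \<longleftrightarrow>
     (\<forall>x\<in>mb_carrier M. x \<noteq> mb_bot M \<longrightarrow> mb_mul M (mb_zero M) x = mb_zero M)"

definition additional_value_law :: "'a mdb_struct \<Rightarrow> bool" where
  "additional_value_law M \<longleftrightarrow>
     (\<forall>x\<in>mb_carrier M. mb_inv M x = mb_bot M \<longrightarrow> mb_mul M (mb_zero M) x = x)"

definition in_class_M :: "'a mdb_struct \<Rightarrow> bool" where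
  "in_class_M M \<longleftrightarrow> is_mdb_struct M \<and> sat_Md_bot M \<and> normal_value_law M \<and>
     additional_value_law M \<and> mb_zero M \<noteq> mb_one M"

definition extend_bot :: "'a md_struct \<Rightarrow> 'a \<Rightarrow> 'a mdb_struct" where
  "extend_bot A b =
     \<lparr> mb_carrier = insert b (md_carrier A),
       mb_zero = md_zero A, mb_one = md_one A, mb_bot = b,
       mb_add = (\<lambda>x y. if x = b \<or> y = b then b else md_add A x y),
       mb_mul = (\<lambda>x y. if x = b \<or> y = b then b else md_mul A x y),
       mb_neg = (\<lambda>x. if x = b then b else md_neg A x),
       mb_inv = (\<lambda>x. if x = b \<or> x = md_zero A then b else md_inv A x) \<rparr>"

definition remove_bot :: "'a mdb_struct \<Rightarrow> 'a md_struct" where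
  "remove_bot M =
     \<lparr> md_carrier = mb_carrier M - {mb_bot M},
       md_zero = mb_zero M, md_one = mb_one M,
       md_add = mb_add M, md_mul = mb_mul M, md_neg = mb_neg M,
       md_inv = (\<lambda>x. if x = mb_zero M then mb_zero M else mb_inv M x) \<rparr>"

definition md_same :: "'a md_struct \<Rightarrow> 'a md_struct \<Rightarrow> bool" where
  "md_same A B \<longleftrightarrow> md_carrier A = md_carrier B \<and>
     md_zero A = md_zero B \<and> md_one A = md_one B \<and>
     (\<forall>x\<in>md_carrier A. \<forall>y\<in>md_carrier A.
        md_add A x y = md_add B x y \<and> md_mul A x y = md_mul B x y) \<and>
     (\<forall>x\<in>md_carrier A. md_neg A x = md_neg B x \<and> md_inv A x = md_inv B x)"

definition mdb_same :: "'a mdb_struct \<Rightarrow> 'a mdb_struct \<Rightarrow> bool" where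
  "mdb_same M N \<longleftrightarrow> mb_carrier M = mb_carrier N \<and>
     mb_zero M = mb_zero N \<and> mb_one M = mb_one N \<and> mb_bot M = mb_bot N \<and>
     (\<forall>x\<in>mb_carrier M. \<forall>y\<in>mb_carrier M.
        mb_add M x y = mb_add N x y \<and> mb_mul M x y = mb_mul N x y) \<and>
     (\<forall>x\<in>mb_carrier M. mb_neg M x = mb_neg N x \<and> mb_inv M x = mb_inv N x)"

end

theory Submission
  imports Defs
begin

text \<open>Adjoining \<open>\<bottom>\<close> to an involutive cancellation meadow and sending all operations
  on \<open>\<bottom>\<close>, as well as \<open>0\<^sup>-\<^sup>1\<close>, to \<open>\<bottom>\<close>, one checks the equations of \<open>Md\<^sub>\<bottom>\<close> by
  cases; the correction terms \<open>0 \<cdot> x\<close> vanish on proper elements. Conversely, in a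
  model of the class the normal value law says that \<open>0 \<cdot> x = 0\<close> exactly for
  \<open>x \<noteq> \<bottom>\<close>; as multiplication by \<open>0\<close> commutes with the operations, the proper
  elements are closed under them, the equations of \<open>Md\<^sub>\<bottom>\<close> restrict to those of
  \<open>Md\<close>, and \<open>x \<cdot> x\<^sup>-\<^sup>1 = 1\<close> for proper \<open>x \<noteq> 0\<close> gives cancellation. Both
  constructions only touch \<open>\<bottom>\<close> and \<open>0\<^sup>-\<^sup>1\<close>, so they are mutually inverse.\<close>

locale cancellation_meadow =
  fixes A :: "'a md_struct"
  assumes icm: "involutive_cancellation_meadow A"
begin

abbreviation "C \<equiv> md_carrier A"
abbreviation zero_md ("\<zero>") where "\<zero> \<equiv> md_zero A"
abbreviation one_md ("\<one>") where "\<one> \<equiv> md_one A"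
abbreviation add_md (infixl "\<oplus>" 65) where "x \<oplus> y \<equiv> md_add A x y"
abbreviation mul_md (infixl "\<otimes>" 70) where "x \<otimes> y \<equiv> md_mul A x y"
abbreviation "neg \<equiv> md_neg A"
abbreviation "recip \<equiv> md_inv A"

lemma closed:
  "\<zero> \<in> C" "\<one> \<in> C"
  "x \<in> C \<Longrightarrow> y \<in> C \<Longrightarrow> x \<oplus> y \<in> C"
  "x \<in> C \<Longrightarrow> y \<in> C \<Longrightarrow> x \<otimes> y \<in> C"
  "x \<in> C \<Longrightarrow> neg x \<in> C"
  "x \<in> C \<Longrightarrow> recip x \<in> C"
  using icm unfolding involutive_cancellation_meadow_def is_md_struct_def by auto

lemma
  assumes "x \<in> C"
  shows add_zero: "x \<oplus> \<zero> = x"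
    and add_neg: "x \<oplus> neg x = \<zero>"
    and one_mul: "\<one> \<otimes> x = x"
    and recip_recip: "recip (recip x) = x"
    and mul_mul_recip: "x \<otimes> (x \<otimes> recip x) = x"
  using assms icm unfolding involutive_cancellation_meadow_def sat_Md_def Let_def by meson+

lemma
  assumes "x \<in> C" "y \<in> C"
  shows add_comm: "x \<oplus> y = y \<oplus> x"
    and mul_comm: "x \<otimes> y = y \<otimes> x"
  using assms icm unfolding involutive_cancellation_meadow_def sat_Md_def Let_def by meson+

lemma
  assumes "x \<in> C" "y \<in> C" "w \<in> C"
  shows add_assoc: "x \<oplus> y \<oplus> w = x \<oplus> (y \<oplus> w)"
    and mul_assoc: "x \<otimes> y \<otimes> w = x \<otimes> (y \<otimes> w)"
    and distrib: "x \<otimes> (y \<oplus> w) = x \<otimes> y \<oplus> x \<otimes> w"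
  using assms icm unfolding involutive_cancellation_meadow_def sat_Md_def Let_def by meson+

lemma mul_left_cancel:
  "x \<in> C \<Longrightarrow> y \<in> C \<Longrightarrow> w \<in> C \<Longrightarrow> x \<noteq> \<zero> \<Longrightarrow> x \<otimes> y = x \<otimes> w \<Longrightarrow> y = w"
  using icm unfolding involutive_cancellation_meadow_def cancellation_law_def by blast

lemma add_left_cancel:
  assumes "x \<in> C" "y \<in> C" "w \<in> C" "x \<oplus> y = x \<oplus> w"
  shows "y = w"
proof -
  have "neg x \<oplus> x \<oplus> y = neg x \<oplus> x \<oplus> w"
    using assms by (simp add: add_assoc closed)
  then show ?thesis
    using assms by (metis add_comm add_neg add_zero closed)
qed

lemma mul_zero: assumes "x \<in> C" shows "x \<otimes> \<zero> = \<zero>"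
proof -
  have "x \<otimes> \<zero> \<oplus> \<zero> = x \<otimes> \<zero> \<oplus> x \<otimes> \<zero>"
    using assms by (metis add_zero closed distrib)
  then show ?thesis
    using assms by (metis add_left_cancel closed)
qed

lemma zero_mul: "x \<in> C \<Longrightarrow> \<zero> \<otimes> x = \<zero>"
  by (metis closed(1) mul_comm mul_zero)

lemma mul_recip: "x \<in> C \<Longrightarrow> x \<noteq> \<zero> \<Longrightarrow> x \<otimes> recip x = \<one>"
  by (rule mul_left_cancel[of x]) (auto simp: closed mul_mul_recip mul_comm[of x \<one>] one_mul)

text \<open>No cancellation is needed here: this is \<open>x \<otimes> (x \<otimes> recip x) = x\<close> at
  \<open>x = recip \<zero>\<close>.\<close>
lemma recip_zero: "recip \<zero> = \<zero>"
  by (metis closed mul_zero mul_mul_recip recip_recip mul_comm)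

lemma recip_nonzero: "x \<in> C \<Longrightarrow> x \<noteq> \<zero> \<Longrightarrow> recip x \<noteq> \<zero>"
  by (metis mul_mul_recip mul_zero)

lemma mul_nonzero: "x \<in> C \<Longrightarrow> y \<in> C \<Longrightarrow> x \<noteq> \<zero> \<Longrightarrow> y \<noteq> \<zero> \<Longrightarrow> x \<otimes> y \<noteq> \<zero>"
  by (metis closed(1) mul_left_cancel mul_zero)

lemma recip_mul:
  assumes "x \<in> C" "y \<in> C"
  shows "recip (x \<otimes> y) = recip x \<otimes> recip y"
proof (cases "x = \<zero> \<or> y = \<zero>")
  case True
  then show ?thesis
    using assms by (auto simp: recip_zero zero_mul mul_zero closed)
next
  case False
  then have xy: "x \<otimes> y \<noteq> \<zero>"
    using assms mul_nonzero by blast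
  have "x \<otimes> y \<otimes> (recip x \<otimes> recip y) = x \<otimes> recip x \<otimes> (y \<otimes> recip y)"
    using assms by (metis closed mul_assoc mul_comm)
  also have "\<dots> = x \<otimes> y \<otimes> recip (x \<otimes> y)"
    using assms False xy by (simp add: mul_recip one_mul closed)
  finally show ?thesis
    using assms xy by (metis closed mul_left_cancel)
qed

lemma neg_neg: assumes "x \<in> C" shows "neg (neg x) = x"
proof -
  have "neg x \<oplus> neg (neg x) = neg x \<oplus> x"
    using assms by (metis add_comm add_neg closed)
  then show ?thesis
    using assms by (metis add_left_cancel closed)
qed

lemma recip_one: "recip \<one> = \<one>"
  by (metis closed mul_mul_recip one_mul)

lemma extend_bot_in_class_M:
  assumes b: "b \<notin> C" and zero_ne_one: "\<zero> \<noteq> \<one>"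
  shows "in_class_M (extend_bot A b)"
proof -
  define add' where "add' = (\<lambda>x y. if x = b \<or> y = b then b else x \<oplus> y)"
  define mul' where "mul' = (\<lambda>x y. if x = b \<or> y = b then b else x \<otimes> y)"
  define neg' where "neg' = (\<lambda>x. if x = b then b else neg x)"
  define recip' where "recip' = (\<lambda>x. if x = b \<or> x = \<zero> then b else recip x)"
  have M: "extend_bot A b = \<lparr>mb_carrier = insert b C, mb_zero = \<zero>, mb_one = \<one>, mb_bot = b,
      mb_add = add', mb_mul = mul', mb_neg = neg', mb_inv = recip'\<rparr>"
    unfolding extend_bot_def add'_def mul'_def neg'_def recip'_def by simp
  have ne_b: "\<And>x. x \<in> C \<Longrightarrow> x \<noteq> b"
    using b by blast
  have "sat_Md_bot (extend_bot A b)"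
    unfolding M sat_Md_bot_def Let_def mdb_struct.simps
  proof (intro conjI)
    show "\<forall>x\<in>insert b C. \<forall>y\<in>insert b C. \<forall>w\<in>insert b C. add' (add' x y) w = add' x (add' y w)"
      unfolding add'_def using ne_b by (auto simp: closed add_assoc)
    show "\<forall>x\<in>insert b C. \<forall>y\<in>insert b C. add' x y = add' y x"
      unfolding add'_def using add_comm by auto
    show "\<forall>x\<in>insert b C. add' x \<zero> = x"
      unfolding add'_def using ne_b by (auto simp: closed add_zero)
    show "\<forall>x\<in>insert b C. add' x (neg' x) = mul' \<zero> x"
      unfolding add'_def neg'_def mul'_def using ne_b by (auto simp: closed add_neg zero_mul)
    show "\<forall>x\<in>insert b C. \<forall>y\<in>insert b C. \<forall>w\<in>insert b C. mul' (mul' x y) w = mul' x (mul' y w)"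
      unfolding mul'_def using ne_b by (auto simp: closed mul_assoc)
    show "\<forall>x\<in>insert b C. \<forall>y\<in>insert b C. mul' x y = mul' y x"
      unfolding mul'_def using mul_comm by auto
    show "\<forall>x\<in>insert b C. mul' \<one> x = x"
      unfolding mul'_def using ne_b by (auto simp: closed one_mul)
    show "\<forall>x\<in>insert b C. \<forall>y\<in>insert b C. \<forall>w\<in>insert b C. mul' x (add' y w) = add' (mul' x y) (mul' x w)"
      unfolding mul'_def add'_def using ne_b by (auto simp: closed distrib)
    show "\<forall>x\<in>insert b C. neg' (neg' x) = x"
      unfolding neg'_def using ne_b by (auto simp: closed neg_neg)
    show "\<forall>x\<in>insert b C. mul' \<zero> (mul' x x) = mul' \<zero> x"
      unfolding mul'_def using ne_b by (auto simp: closed zero_mul)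
    show "\<forall>x\<in>insert b C. recip' (recip' x) = add' x (mul' \<zero> (recip' x))"
      unfolding recip'_def add'_def mul'_def using ne_b
      by (auto simp: closed recip_recip recip_nonzero zero_mul add_zero)
    show "\<forall>x\<in>insert b C. mul' x (recip' x) = add' \<one> (mul' \<zero> (recip' x))"
      unfolding recip'_def add'_def mul'_def using ne_b
      by (auto simp: closed mul_recip zero_mul add_zero)
    show "\<forall>x\<in>insert b C. \<forall>y\<in>insert b C. recip' (mul' x y) = mul' (recip' x) (recip' y)"
      unfolding recip'_def mul'_def using ne_b
      by (auto simp: closed recip_mul mul_nonzero zero_mul mul_zero)
    show "recip' \<one> = \<one>"
      unfolding recip'_def using ne_b zero_ne_one by (auto simp: closed recip_one)
  qed (auto simp: recip'_def add'_def mul'_def)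
  moreover have "is_mdb_struct (extend_bot A b)"
    unfolding M is_mdb_struct_def add'_def mul'_def neg'_def recip'_def by (auto simp: closed)
  moreover have "normal_value_law (extend_bot A b)"
    unfolding M normal_value_law_def mul'_def using ne_b by (auto simp: closed zero_mul)
  moreover have "additional_value_law (extend_bot A b)"
    unfolding M additional_value_law_def mul'_def recip'_def using ne_b by (auto simp: closed zero_mul)
  ultimately show ?thesis
    unfolding in_class_M_def using zero_ne_one M by simp
qed

lemma remove_extend_bot: "b \<notin> C \<Longrightarrow> md_same (remove_bot (extend_bot A b)) A"
  unfolding remove_bot_def extend_bot_def md_same_def by (auto simp: recip_zero closed)

end

locale bot_meadow =
  fixes M :: "'a mdb_struct"
  assumes in_M: "in_class_M M"
begin

abbreviation "C \<equiv> mb_carrier M"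
abbreviation zero_mb ("\<zero>") where "\<zero> \<equiv> mb_zero M"
abbreviation one_mb ("\<one>") where "\<one> \<equiv> mb_one M"
abbreviation bot_mb ("\<bottom>\<^sub>M") where "\<bottom>\<^sub>M \<equiv> mb_bot M"
abbreviation add_mb (infixl "\<oplus>" 65) where "x \<oplus> y \<equiv> mb_add M x y"
abbreviation mul_mb (infixl "\<otimes>" 70) where "x \<otimes> y \<equiv> mb_mul M x y"
abbreviation "neg \<equiv> mb_neg M"
abbreviation "recip \<equiv> mb_inv M"

lemma closed:
  "\<zero> \<in> C" "\<one> \<in> C" "\<bottom>\<^sub>M \<in> C"
  "x \<in> C \<Longrightarrow> y \<in> C \<Longrightarrow> x \<oplus> y \<in> C"
  "x \<in> C \<Longrightarrow> y \<in> C \<Longrightarrow> x \<otimes> y \<in> C"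
  "x \<in> C \<Longrightarrow> neg x \<in> C"
  "x \<in> C \<Longrightarrow> recip x \<in> C"
  using in_M unfolding in_class_M_def is_mdb_struct_def by auto

lemma
  assumes "x \<in> C"
  shows add_zero: "x \<oplus> \<zero> = x"
    and add_neg: "x \<oplus> neg x = \<zero> \<otimes> x"
    and one_mul: "\<one> \<otimes> x = x"
    and neg_neg: "neg (neg x) = x"
    and recip_recip: "recip (recip x) = x \<oplus> \<zero> \<otimes> recip x"
    and mul_recip: "x \<otimes> recip x = \<one> \<oplus> \<zero> \<otimes> recip x"
    and add_bot: "x \<oplus> \<bottom>\<^sub>M = \<bottom>\<^sub>M"
    and mul_bot: "x \<otimes> \<bottom>\<^sub>M = \<bottom>\<^sub>M"
  using assms in_M unfolding in_class_M_def sat_Md_bot_def Let_def by meson+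

lemma
  assumes "x \<in> C" "y \<in> C"
  shows add_comm: "x \<oplus> y = y \<oplus> x"
    and mul_comm: "x \<otimes> y = y \<otimes> x"
  using assms in_M unfolding in_class_M_def sat_Md_bot_def Let_def by meson+

lemma
  assumes "x \<in> C" "y \<in> C" "w \<in> C"
  shows add_assoc: "x \<oplus> y \<oplus> w = x \<oplus> (y \<oplus> w)"
    and mul_assoc: "x \<otimes> y \<otimes> w = x \<otimes> (y \<otimes> w)"
    and distrib: "x \<otimes> (y \<oplus> w) = x \<otimes> y \<oplus> x \<otimes> w"
  using assms in_M unfolding in_class_M_def sat_Md_bot_def Let_def by meson+

lemma recip_zero: "recip \<zero> = \<bottom>\<^sub>M"
  using in_M unfolding in_class_M_def sat_Md_bot_def Let_def by meson

lemma zero_mul_normal: "x \<in> C \<Longrightarrow> x \<noteq> \<bottom>\<^sub>M \<Longrightarrow> \<zero> \<otimes> x = \<zero>"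
  using in_M unfolding in_class_M_def normal_value_law_def by blast

lemma zero_mul_additional: "x \<in> C \<Longrightarrow> recip x = \<bottom>\<^sub>M \<Longrightarrow> \<zero> \<otimes> x = x"
  using in_M unfolding in_class_M_def additional_value_law_def by blast

lemma zero_ne_one: "\<zero> \<noteq> \<one>"
  using in_M unfolding in_class_M_def by blast

lemma zero_ne_bot: "\<zero> \<noteq> \<bottom>\<^sub>M"
proof
  assume "\<zero> = \<bottom>\<^sub>M"
  then have "\<one> = \<bottom>\<^sub>M"
    using add_zero[of \<one>] add_bot[of \<one>] closed(2) by simp
  with \<open>\<zero> = \<bottom>\<^sub>M\<close> show False
    using zero_ne_one by simp
qed

lemma one_ne_bot: "\<one> \<noteq> \<bottom>\<^sub>M"
  using one_mul[of \<zero>] mul_bot[of \<zero>] mul_comm[of \<zero> \<one>] closed(1,2) zero_ne_bot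
  by auto

lemma bot_add: "y \<in> C \<Longrightarrow> \<bottom>\<^sub>M \<oplus> y = \<bottom>\<^sub>M"
  by (metis add_bot add_comm closed(3))

lemma bot_mul: "y \<in> C \<Longrightarrow> \<bottom>\<^sub>M \<otimes> y = \<bottom>\<^sub>M"
  by (metis mul_bot mul_comm closed(3))

lemma add_ne_bot:
  assumes "x \<in> C" "y \<in> C" "x \<noteq> \<bottom>\<^sub>M" "y \<noteq> \<bottom>\<^sub>M"
  shows "x \<oplus> y \<noteq> \<bottom>\<^sub>M"
proof
  assume "x \<oplus> y = \<bottom>\<^sub>M"
  then have "\<zero> \<otimes> \<bottom>\<^sub>M = \<zero> \<oplus> \<zero>"
    using assms by (metis distrib closed(1) zero_mul_normal)
  then show False
    using zero_ne_bot by (metis add_zero closed(1) mul_bot)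
qed

lemma mul_ne_bot:
  assumes "x \<in> C" "y \<in> C" "x \<noteq> \<bottom>\<^sub>M" "y \<noteq> \<bottom>\<^sub>M"
  shows "x \<otimes> y \<noteq> \<bottom>\<^sub>M"
proof
  assume "x \<otimes> y = \<bottom>\<^sub>M"
  then have "\<zero> \<otimes> \<bottom>\<^sub>M = \<zero> \<otimes> y"
    using assms by (metis mul_assoc closed(1) zero_mul_normal)
  then show False
    using assms zero_ne_bot by (metis closed(1) mul_bot zero_mul_normal)
qed

lemma neg_ne_bot: "x \<in> C \<Longrightarrow> x \<noteq> \<bottom>\<^sub>M \<Longrightarrow> neg x \<noteq> \<bottom>\<^sub>M"
  by (metis add_bot add_neg zero_mul_normal zero_ne_bot)

lemma recip_ne_bot: "x \<in> C \<Longrightarrow> x \<noteq> \<bottom>\<^sub>M \<Longrightarrow> x \<noteq> \<zero> \<Longrightarrow> recip x \<noteq> \<bottom>\<^sub>M"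
  using zero_mul_additional zero_mul_normal by metis

lemma recip_recip_proper: "x \<in> C \<Longrightarrow> x \<noteq> \<bottom>\<^sub>M \<Longrightarrow> x \<noteq> \<zero> \<Longrightarrow> recip (recip x) = x"
  by (metis add_zero closed(7) recip_recip recip_ne_bot zero_mul_normal)

lemma mul_recip_proper: "x \<in> C \<Longrightarrow> x \<noteq> \<bottom>\<^sub>M \<Longrightarrow> x \<noteq> \<zero> \<Longrightarrow> x \<otimes> recip x = \<one>"
  by (metis add_zero closed mul_recip recip_ne_bot zero_mul_normal)

lemma recip_ne_zero: "x \<in> C \<Longrightarrow> x \<noteq> \<bottom>\<^sub>M \<Longrightarrow> x \<noteq> \<zero> \<Longrightarrow> recip x \<noteq> \<zero>"
  by (metis recip_recip_proper recip_zero)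

lemma neg_bot: "neg \<bottom>\<^sub>M = \<bottom>\<^sub>M"
proof (rule ccontr)
  assume "neg \<bottom>\<^sub>M \<noteq> \<bottom>\<^sub>M"
  then have "neg \<bottom>\<^sub>M \<oplus> \<bottom>\<^sub>M = \<zero>"
    using add_neg[of "neg \<bottom>\<^sub>M"] neg_neg[of "\<bottom>\<^sub>M"] zero_mul_normal closed(3,6) by simp
  then show False
    using add_bot closed(3,6) zero_ne_bot by simp
qed

lemma recip_bot: "recip \<bottom>\<^sub>M = \<bottom>\<^sub>M"
proof (rule ccontr)
  assume ne: "recip \<bottom>\<^sub>M \<noteq> \<bottom>\<^sub>M"
  have "recip (recip \<bottom>\<^sub>M) = \<bottom>\<^sub>M"
    by (metis bot_add closed(3) recip_recip closed(1,5,7))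
  then have "recip \<bottom>\<^sub>M = \<zero>"
    using ne by (metis closed(7) zero_mul_additional zero_mul_normal closed(3))
  then have "\<bottom>\<^sub>M = \<one> \<oplus> \<zero> \<otimes> \<zero>"
    using mul_recip[of "\<bottom>\<^sub>M"] bot_mul closed(1,3) by simp
  then have "\<bottom>\<^sub>M = \<one>"
    using zero_mul_normal[of \<zero>] zero_ne_bot add_zero closed(1,2) by simp
  then show False
    using one_ne_bot by simp
qed

lemma remove_bot_eq:
  "remove_bot M = \<lparr>md_carrier = C - {\<bottom>\<^sub>M}, md_zero = \<zero>, md_one = \<one>,
     md_add = (\<oplus>), md_mul = (\<otimes>), md_neg = neg,
     md_inv = (\<lambda>x. if x = \<zero> then \<zero> else recip x)\<rparr>"
  unfolding remove_bot_def by simp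

lemma remove_bot_is_md_struct: "is_md_struct (remove_bot M)"
  unfolding is_md_struct_def remove_bot_eq md_struct.simps
  using zero_ne_bot one_ne_bot
  by (auto simp: closed add_ne_bot mul_ne_bot neg_ne_bot recip_ne_bot)

lemma remove_bot_sat_Md: "sat_Md (remove_bot M)"
  unfolding sat_Md_def Let_def remove_bot_eq md_struct.simps
proof (intro conjI)
  let ?C = "C - {\<bottom>\<^sub>M}"
  let ?recip = "\<lambda>x. if x = \<zero> then \<zero> else recip x"
  show "\<forall>x\<in>?C. \<forall>y\<in>?C. \<forall>w\<in>?C. x \<oplus> y \<oplus> w = x \<oplus> (y \<oplus> w)"
    by (simp add: add_assoc)
  show "\<forall>x\<in>?C. \<forall>y\<in>?C. x \<oplus> y = y \<oplus> x"
    by (intro ballI, rule add_comm) auto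
  show "\<forall>x\<in>?C. x \<oplus> \<zero> = x"
    by (simp add: add_zero)
  show "\<forall>x\<in>?C. x \<oplus> neg x = \<zero>"
    by (simp add: add_neg zero_mul_normal)
  show "\<forall>x\<in>?C. \<forall>y\<in>?C. \<forall>w\<in>?C. x \<otimes> y \<otimes> w = x \<otimes> (y \<otimes> w)"
    by (simp add: mul_assoc)
  show "\<forall>x\<in>?C. \<forall>y\<in>?C. x \<otimes> y = y \<otimes> x"
    by (intro ballI, rule mul_comm) auto
  show "\<forall>x\<in>?C. \<one> \<otimes> x = x"
    by (simp add: one_mul)
  show "\<forall>x\<in>?C. \<forall>y\<in>?C. \<forall>w\<in>?C. x \<otimes> (y \<oplus> w) = x \<otimes> y \<oplus> x \<otimes> w"
    by (simp add: distrib)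
  show "\<forall>x\<in>?C. ?recip (?recip x) = x"
    by (simp add: recip_ne_zero recip_recip_proper)
  show "\<forall>x\<in>?C. x \<otimes> (x \<otimes> ?recip x) = x"
    using zero_ne_bot
    by (auto simp: mul_recip_proper zero_mul_normal mul_comm[of _ \<one>] one_mul closed)
qed

lemma remove_bot_cancellation_law: "cancellation_law (remove_bot M)"
  unfolding cancellation_law_def remove_bot_eq md_struct.simps
proof (intro ballI impI)
  fix x y w
  assume "x \<in> C - {\<bottom>\<^sub>M}" "y \<in> C - {\<bottom>\<^sub>M}" "w \<in> C - {\<bottom>\<^sub>M}"
    and "x \<noteq> \<zero> \<and> x \<otimes> y = x \<otimes> w"
  then have x: "x \<in> C" "x \<noteq> \<bottom>\<^sub>M" "x \<noteq> \<zero>" and y: "y \<in> C" and w: "w \<in> C"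
    and eq: "x \<otimes> y = x \<otimes> w"
    by auto
  have divide: "recip x \<otimes> (x \<otimes> u) = u" if "u \<in> C" for u
  proof -
    have "recip x \<otimes> (x \<otimes> u) = recip x \<otimes> x \<otimes> u"
      using that x by (simp add: closed mul_assoc)
    also have "recip x \<otimes> x = \<one>"
      using x by (simp add: closed mul_comm[of "recip x" x] mul_recip_proper)
    finally show ?thesis
      using that by (simp add: one_mul)
  qed
  have "y = recip x \<otimes> (x \<otimes> y)"
    using divide[OF y] by simp
  also have "\<dots> = w"
    using divide[OF w] eq by simp
  finally show "y = w" .
qed

lemma remove_bot_involutive_cancellation_meadow:
  "involutive_cancellation_meadow (remove_bot M)"
  unfolding involutive_cancellation_meadow_def
  using remove_bot_is_md_struct remove_bot_sat_Md remove_bot_cancellation_law by blast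

lemma extend_remove_bot: "mdb_same (extend_bot (remove_bot M) \<bottom>\<^sub>M) M"
  unfolding mdb_same_def extend_bot_def remove_bot_eq mdb_struct.simps md_struct.simps
proof (intro conjI ballI refl)
  show "insert \<bottom>\<^sub>M (C - {\<bottom>\<^sub>M}) = C"
    using closed(3) by blast
  fix x y assume "x \<in> insert \<bottom>\<^sub>M (C - {\<bottom>\<^sub>M})" "y \<in> insert \<bottom>\<^sub>M (C - {\<bottom>\<^sub>M})"
  then show "(if x = \<bottom>\<^sub>M \<or> y = \<bottom>\<^sub>M then \<bottom>\<^sub>M else x \<oplus> y) = x \<oplus> y"
    and "(if x = \<bottom>\<^sub>M \<or> y = \<bottom>\<^sub>M then \<bottom>\<^sub>M else x \<otimes> y) = x \<otimes> y"
    by (auto simp: closed bot_add add_bot bot_mul mul_bot)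
next
  fix x assume "x \<in> insert \<bottom>\<^sub>M (C - {\<bottom>\<^sub>M})"
  show "(if x = \<bottom>\<^sub>M then \<bottom>\<^sub>M else neg x) = neg x"
    by (simp add: neg_bot)
  show "(if x = \<bottom>\<^sub>M \<or> x = \<zero> then \<bottom>\<^sub>M else if x = \<zero> then \<zero> else recip x) = recip x"
    by (simp add: recip_bot recip_zero)
qed

end

theorem theorem3p2:
  shows "(\<forall>(A :: 'a md_struct) (b :: 'a).
            involutive_cancellation_meadow A \<and> md_zero A \<noteq> md_one A \<and> b \<notin> md_carrier A \<longrightarrow>
              in_class_M (extend_bot A b) \<and> md_same (remove_bot (extend_bot A b)) A) \<and>
         (\<forall>(M :: 'a mdb_struct).
            in_class_M M \<longrightarrow>
              involutive_cancellation_meadow (remove_bot M) \<and>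
              md_zero (remove_bot M) \<noteq> md_one (remove_bot M) \<and>
              mb_bot M \<notin> md_carrier (remove_bot M) \<and>
              mdb_same (extend_bot (remove_bot M) (mb_bot M)) M)"
proof (rule conjI; intro allI impI)
  fix A :: "'a md_struct" and b :: 'a
  assume hyps: "involutive_cancellation_meadow A \<and> md_zero A \<noteq> md_one A \<and> b \<notin> md_carrier A"
  then interpret cancellation_meadow A
    by unfold_locales blast
  show "in_class_M (extend_bot A b) \<and> md_same (remove_bot (extend_bot A b)) A"
    using hyps extend_bot_in_class_M remove_extend_bot by simp
next
  fix M :: "'a mdb_struct"
  assume "in_class_M M"
  then interpret bot_meadow M
    by unfold_locales
  have "md_zero (remove_bot M) \<noteq> md_one (remove_bot M)"
    and "mb_bot M \<notin> md_carrier (remove_bot M)"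
    using zero_ne_one by (simp_all add: remove_bot_def)
  then show "involutive_cancellation_meadow (remove_bot M) \<and>
      md_zero (remove_bot M) \<noteq> md_one (remove_bot M) \<and>
      mb_bot M \<notin> md_carrier (remove_bot M) \<and>
      mdb_same (extend_bot (remove_bot M) (mb_bot M)) M"
    using remove_bot_involutive_cancellation_meadow extend_remove_bot by simp
qed

end
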